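(* Consider the four-thread trace $T$ (positions 1–14): $acq(y)$ (thread 1), $w(z_1)$ (thread 1), $r(z_1)$ (thread 2), $w(x)$ (thread 2), $w(z_2)$ (thread 2), $r(z_2)$ (thread 1), $rel(y)$ (thread 1), $acq(y)$ (thread 3), $w(z_3)$ (thread 3), $r(z_3)$ (thread 4), $w(x)$ (thread 4), $w(z_4)$ (thread 4), $r(z_4)$ (thread 3), $rel(y)$ (thread 3). Let $e$ be the write on $x$ at position 4 and $f$ the write on $x$ at position 11. Then $(e,f)$ is a potential Lockset-PWR data race pair of $T$ (with $LS(e)=LS(f)=\emptyset$), but $(e,f)\notin\mathcal{P}(T)$. In particular, not every potential Lockset-PWR data race pair is predictable.
   Context: Traces. A trace $T$ is a finite sequence of pairwise distinct events. Each event $e$ belongs to a thread $\mathrm{tid}(e)$ and is one of: a read $r(x)$ or write $w(x)$ of a shared variable $x$, or an acquire $acq(y)$ or release $rel(y)$ of a lock $y$. $\mathrm{pos}_T(e)$ is the index of $e$ in $T$. The projection of $T$ onto thread $i$ is the subsequence of events of thread $i$. A critical section $CS$ on lock $y$ consists of a matching acquire/release pair $acq(CS)$, $rel(CS)$ in thread $i$ together with the events of thread $i$ between them; we write $e \in CS$. The lockset $LS(e)$ of an event $e$ is the set of locks $y$ such that $e$ belongs to some critical section on $y$. Two events are conflicting if they are reads/writes on the same variable, at least one is a write, and they belong to different threads. For a read $e$ on $x$, a write $f$ on $x$ is the last write of $e$ w.r.t. $T$ if $f$ precedes $e$ in $T$ and no other write on $x$ lies strictly between them. Correct reordering. $T'$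 is a correctly reordered prefix of $T$ if $T'$ is a sequence of some of the events of $T$ such that: (i) for every thread $i$, the projection of $T'$ onto $i$ is a prefix of the projection of $T$ onto $i$; (ii) for every read $e$ in $T'$ whose last write w.r.t. $T$ is $f$, $f$ is in $T'$ and is also the last write of $e$ w.r.t. $T'$; (iii) for any two acquires $e_1,e_2$ on the same lock with $e_1$ before $e_2$ in $T'$, the matching release of $e_1$ is in $T'$ and lies strictly between $e_1$ and $e_2$. Predictable races. $(e,f)$ is a predictable data race pair of $T$ if $e,f$ are conflicting events of $T$ and there is a correctly reordered prefix $T'$ of $T$ in which $e$ appears immediately before $f$; if both are writes we additionally require $\mathrm{pos}_T(e)<\mathrm{pos}_T(f)$. $\mathcal{P}(T)$ denotes the set of all such pairs. PWR relation. $<^{PWR}$ is the smallest strict partial order on the events of $T$ such that: (PO) if $\mathrm{tid}(e)=\mathrm{tid}(f)$ and $\mathrm{pos}_T(e)<\mathrm{pos}_T(f)$ then $e<^{PWR}f$; (WRD) if the write $w$ is the last write w.r.t. $T$ of the read $r$ then $w<^{PWR}r$; (ROD) if $CS, CS'$ are distinct critical sections on the same lock, $e\in CS$, $f\in CS'$ and $e<^{PWR}f$, then $rel(CS)<^{PWR}f$. Potential pairs. $(e,f)$ is a potential Lockset-PWR data race pair if $e,f$ are conflicting, $LS(e)\cap LS(f)=\emptyset$, neither $e<^{PWR}f$ nor $f<^{PWR}e$, and either both are writes or $e$ is a read and $f$ a write. *)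

theory Defs
  imports Main
begin

datatype act = Rd nat | Wr nat | Acq nat | Rel nat

text \<open>An event carries a unique identifier (events of a trace are pairwise distinct),
  its thread and its operation.\<close>
datatype event = Ev (eid: nat) (tid: nat) (act: act)

type_synonym trace = "event list"

definition is_read :: "event \<Rightarrow> bool" where
  "is_read e \<longleftrightarrow> (\<exists>x. act e = Rd x)"
definition is_write :: "event \<Rightarrow> bool" where
  "is_write e \<longleftrightarrow> (\<exists>x. act e = Wr x)"
definition is_acq :: "event \<Rightarrow> bool" where
  "is_acq e \<longleftrightarrow> (\<exists>y. act e = Acq y)"

fun var_of :: "act \<Rightarrow> nat option" where
  "var_of (Rd x) = Some x" | "var_of (Wr x) = Some x" | "var_of _ = None"

fun lock_of :: "act \<Rightarrow> nat option" where
  "lock_of (Acq y) = Some y" | "lock_of (Rel y) = Some y" | "lock_of _ = None"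

definition before :: "trace \<Rightarrow> event \<Rightarrow> event \<Rightarrow> bool" where
  "before T e f \<longleftrightarrow> (\<exists>i j. i < j \<and> j < length T \<and> T ! i = e \<and> T ! j = f)"

definition last_write :: "trace \<Rightarrow> event \<Rightarrow> event \<Rightarrow> bool" where
  "last_write T r w \<longleftrightarrow> (\<exists>x. act r = Rd x \<and> act w = Wr x \<and> before T w r \<and>
     \<not> (\<exists>w'. act w' = Wr x \<and> before T w w' \<and> before T w' r))"

definition cs :: "trace \<Rightarrow> event \<Rightarrow> event \<Rightarrow> bool" where
  "cs T a r \<longleftrightarrow> (\<exists>y. act a = Acq y \<and> act r = Rel y \<and> tid a = tid r \<and> before T a r \<and>
     \<not> (\<exists>r'. act r' = Rel y \<and> tid r' = tid a \<and> before T a r' \<and> before T r' r))"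

definition cs_lock :: "event \<Rightarrow> nat" where
  "cs_lock a = the (lock_of (act a))"

definition in_cs :: "trace \<Rightarrow> event \<Rightarrow> event \<Rightarrow> event \<Rightarrow> bool" where
  "in_cs T a r e \<longleftrightarrow> cs T a r \<and> tid e = tid a \<and> e \<in> set T \<and>
     (e = a \<or> before T a e) \<and> (e = r \<or> before T e r)"

definition lockset :: "trace \<Rightarrow> event \<Rightarrow> nat set" where
  "lockset T e = {y. \<exists>a r. in_cs T a r e \<and> cs_lock a = y}"

definition conflicting :: "trace \<Rightarrow> event \<Rightarrow> event \<Rightarrow> bool" where
  "conflicting T e f \<longleftrightarrow> e \<in> set T \<and> f \<in> set T \<and> tid e \<noteq> tid f \<and>
     (\<exists>x. (act e = Wr x \<or> act e = Rd x) \<and> (act f = Wr x \<or> act f = Rd x) \<and>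
          (act e = Wr x \<or> act f = Wr x))"

definition correct_reordered_prefix :: "trace \<Rightarrow> trace \<Rightarrow> bool" where
  "correct_reordered_prefix T T' \<longleftrightarrow> distinct T' \<and> set T' \<subseteq> set T \<and>
     (\<forall>i. \<exists>s. filter (\<lambda>e. tid e = i) T' @ s = filter (\<lambda>e. tid e = i) T) \<and>
     (\<forall>e \<in> set T'. \<forall>f. is_read e \<and> last_write T e f \<longrightarrow> f \<in> set T' \<and> last_write T' e f) \<and>
     (\<forall>e1 e2. is_acq e1 \<and> is_acq e2 \<and> lock_of (act e1) = lock_of (act e2) \<and> before T' e1 e2 \<longrightarrow>
        (\<exists>r. cs T e1 r \<and> r \<in> set T' \<and> before T' e1 r \<and> before T' r e2))"

definition predictable_race :: "trace \<Rightarrow> event \<Rightarrow> event \<Rightarrow> bool" where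
  "predictable_race T e f \<longleftrightarrow> conflicting T e f \<and>
     (\<exists>T'. correct_reordered_prefix T T' \<and>
        (\<exists>i. Suc i < length T' \<and> T' ! i = e \<and> T' ! Suc i = f)) \<and>
     (is_write e \<and> is_write f \<longrightarrow> before T e f)"

definition P :: "trace \<Rightarrow> (event \<times> event) set" where
  "P T = {(e, f). predictable_race T e f}"

inductive pwr :: "trace \<Rightarrow> event \<Rightarrow> event \<Rightarrow> bool" for T where
  PO: "tid e = tid f \<Longrightarrow> before T e f \<Longrightarrow> pwr T e f"
| WRD: "last_write T r w \<Longrightarrow> pwr T w r"
| ROD: "cs T a r \<Longrightarrow> cs T a' r' \<Longrightarrow> (a, r) \<noteq> (a', r') \<Longrightarrow> cs_lock a = cs_lock a' \<Longrightarrow>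
        in_cs T a r e \<Longrightarrow> in_cs T a' r' f \<Longrightarrow> pwr T e f \<Longrightarrow> pwr T r f"
| trans: "pwr T e g \<Longrightarrow> pwr T g f \<Longrightarrow> pwr T e f"

definition potential_lockset_pwr :: "trace \<Rightarrow> event \<Rightarrow> event \<Rightarrow> bool" where
  "potential_lockset_pwr T e f \<longleftrightarrow> conflicting T e f \<and> lockset T e \<inter> lockset T f = {} \<and>
     \<not> pwr T e f \<and> \<not> pwr T f e \<and> ((is_write e \<and> is_write f) \<or> (is_read e \<and> is_write f))"

text \<open>Variables: x = 0, z_k = k. Lock: y = 0. Event ids are the positions 1..14.\<close>
definition ex_trace :: trace where
  "ex_trace =
    [Ev 1 1 (Acq 0), Ev 2 1 (Wr 1), Ev 3 2 (Rd 1), Ev 4 2 (Wr 0), Ev 5 2 (Wr 2),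
     Ev 6 1 (Rd 2), Ev 7 1 (Rel 0),
     Ev 8 3 (Acq 0), Ev 9 3 (Wr 3), Ev 10 4 (Rd 3), Ev 11 4 (Wr 0), Ev 12 4 (Wr 4),
     Ev 13 3 (Rd 4), Ev 14 3 (Rel 0)]"

end

theory Submission
  imports Defs
begin

text \<open>
  Every PWR edge stays inside the thread group \<open>{1, 2}\<close> or inside \<open>{3, 4}\<close>: program order
  and the critical sections never leave a thread, and each read takes its value from the
  other thread of its own group. Hence the two writes on \<open>x\<close> are PWR-unordered, and neither
  lies in a critical section.

  They are nevertheless no predictable race. In a correct reordering both acquires of \<open>y\<close>
  must be present, since each is forced before one of the two writes by a chain of program
  order and last-write edges. The critical section that is entered first has to be left
  before the other one is entered; but its release is forced after its own write by a
  similar chain. So either a release falls between the two writes, or the second write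
  precedes the first; in neither case are they adjacent.
\<close>

lemma before_Nil [simp]: "\<not> before [] a b"
  by (simp add: before_def)

lemma before_Cons [simp]: "before (x # L) a b \<longleftrightarrow> (x = a \<and> b \<in> set L) \<or> before L a b"
proof
  assume "before (x # L) a b"
  then obtain i j where ij: "i < j" "j < length (x # L)" "(x # L) ! i = a" "(x # L) ! j = b"
    unfolding before_def by blast
  then obtain j' where j': "j = Suc j'" by (cases j) auto
  show "(x = a \<and> b \<in> set L) \<or> before L a b"
  proof (cases i)
    case 0
    then show ?thesis using ij j' by auto
  next
    case (Suc i')
    then show ?thesis using ij j' unfolding before_def by auto
  qed
next
  assume "(x = a \<and> b \<in> set L) \<or> before L a b"
  then show "before (x # L) a b"
  proof
    assume "x = a \<and> b \<in> set L"
    then obtain k where "k < length L" "L ! k = b" "x = a" by (auto simp: in_set_conv_nth)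
    then show ?thesis unfolding before_def by (intro exI[of _ 0] exI[of _ "Suc k"]) auto
  next
    assume "before L a b"
    then obtain i j where "i < j" "j < length L" "L ! i = a" "L ! j = b"
      unfolding before_def by blast
    then show ?thesis unfolding before_def by (intro exI[of _ "Suc i"] exI[of _ "Suc j"]) auto
  qed
qed

lemma before_in_set: "before L a b \<Longrightarrow> a \<in> set L \<and> b \<in> set L"
  by (induction L) auto

lemma before_irrefl: "distinct L \<Longrightarrow> \<not> before L a a"
  by (induction L) auto

lemma before_trans: "distinct L \<Longrightarrow> before L a b \<Longrightarrow> before L b c \<Longrightarrow> before L a c"
  by (induction L) (auto dest: before_in_set)

lemma before_total: "a \<in> set L \<Longrightarrow> b \<in> set L \<Longrightarrow> a \<noteq> b \<Longrightarrow> before L a b \<or> before L b a"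
  by (induction L) auto

lemma before_filter_iff: "before (filter Q L) a b \<longleftrightarrow> Q a \<and> Q b \<and> before L a b"
  by (induction L) (auto dest: before_in_set)

lemma before_append_left:
  "distinct (xs @ ys) \<Longrightarrow> b \<in> set xs \<Longrightarrow> before (xs @ ys) a b \<Longrightarrow> before xs a b"
  by (induction xs) (auto dest: before_in_set)

lemma adjacent_nth_not_before:
  assumes "distinct L" "Suc i < length L" "L ! i = e" "L ! Suc i = f"
  shows "\<not> before L f e" and "\<not> (before L e g \<and> before L g f)"
proof -
  have index_eq: "k = j" if "k < length L" "j < length L" "L ! k = L ! j" for k j
    using that assms(1) nth_eq_iff_index_eq by blast
  show "\<not> before L f e"
  proof
    assume "before L f e"
    then obtain k j where "k < j" "j < length L" "L ! k = f" "L ! j = e"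
      unfolding before_def by blast
    then show False using index_eq[of j i] index_eq[of k "Suc i"] assms(2-4) by simp
  qed
  show "\<not> (before L e g \<and> before L g f)"
  proof
    assume "before L e g \<and> before L g f"
    then obtain i1 k1 k2 j2 where "i1 < k1" "k1 < length L" "L ! i1 = e" "L ! k1 = g"
      "k2 < j2" "j2 < length L" "L ! k2 = g" "L ! j2 = f" unfolding before_def by blast
    then show False using index_eq[of k1 k2] index_eq[of i1 i] index_eq[of j2 "Suc i"] assms(2-4)
      by simp
  qed
qed

lemma last_write_intro:
  assumes "distinct T" "act r = Rd x" "act w = Wr x" "before T w r"
    and "\<forall>w' \<in> set T. act w' = Wr x \<longrightarrow> w' = w"
  shows "last_write T r w"
  using assms before_in_set before_irrefl unfolding last_write_def by blast

lemma cs_intro: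
  assumes "distinct T" "act a = Acq y" "act r = Rel y" "tid a = tid r" "before T a r"
    and "\<forall>r' \<in> set T. act r' = Rel y \<and> tid r' = tid a \<longrightarrow> r' = r"
  shows "cs T a r"
  using assms before_in_set before_irrefl unfolding cs_def by blast

lemma cs_unique:
  assumes "distinct T" "cs T a r" "cs T a r'"
  shows "r = r'"
proof (rule ccontr)
  obtain y where y: "act a = Acq y" "act r = Rel y" "act r' = Rel y"
    "tid r = tid a" "tid r' = tid a" "before T a r" "before T a r'"
    using assms(2,3) unfolding cs_def by auto
  have first: "\<not> before T r2 r1" if "cs T a r1" "act r2 = Rel y" "tid r2 = tid a" "before T a r2"
    for r1 r2
    using that y(1) unfolding cs_def by auto
  assume "r \<noteq> r'"
  then have "before T r r' \<or> before T r' r"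
    using before_total before_in_set y(6,7) by blast
  moreover have "\<not> before T r' r" using first[OF assms(2) y(3,5,7)] .
  moreover have "\<not> before T r r'" using first[OF assms(3) y(2,4,6)] .
  ultimately show False by blast
qed

lemma lockset_eq_empty:
  assumes "\<And>a. a \<in> set T \<Longrightarrow> tid a = tid e \<Longrightarrow> \<not> is_acq a"
  shows "lockset T e = {}"
proof -
  have "\<not> in_cs T a r e" for a r
  proof
    assume "in_cs T a r e"
    then obtain y where "act a = Acq y" "before T a r" "tid e = tid a"
      unfolding in_cs_def cs_def by blast
    then show False using assms[of a] before_in_set unfolding is_acq_def by auto
  qed
  then show ?thesis unfolding lockset_def by blast
qed

lemma pwr_tid_invariant:
  assumes "\<And>r w. last_write T r w \<Longrightarrow> c (tid w) = c (tid r)"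
  shows "pwr T a b \<Longrightarrow> c (tid a) = c (tid b)"
proof (induction rule: pwr.induct)
  case (ROD a r a' r' e f)
  have "tid r = tid e" using ROD.hyps(1,5) unfolding cs_def in_cs_def by auto
  then show ?case using ROD.IH by simp
qed (simp_all add: assms)

definition po_wrd :: "trace \<Rightarrow> event \<Rightarrow> event \<Rightarrow> bool" where
  "po_wrd T a b \<longleftrightarrow> (tid a = tid b \<and> before T a b) \<or> last_write T b a"

lemma tranclp_po_wrd_po:
  "tid a = tid b \<Longrightarrow> before T a b \<Longrightarrow> last_write T c b \<Longrightarrow> tid c = tid d \<Longrightarrow> before T c d \<Longrightarrow>
    (po_wrd T)\<^sup>+\<^sup>+ a d"
  by (meson po_wrd_def tranclp.r_into_trancl tranclp.trancl_into_trancl)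

lemma correct_reordered_prefix_po_wrd:
  assumes crp: "correct_reordered_prefix T T'" and "distinct T"
    and "po_wrd T a b" and "b \<in> set T'"
  shows "before T' a b"
  using \<open>po_wrd T a b\<close> unfolding po_wrd_def
proof
  assume po: "tid a = tid b \<and> before T a b"
  let ?Q = "\<lambda>e. tid e = tid b"
  obtain s where s: "filter ?Q T' @ s = filter ?Q T"
    using crp unfolding correct_reordered_prefix_def by blast
  have "before (filter ?Q T' @ s) a b"
    unfolding s using po by (simp add: before_filter_iff)
  moreover have "distinct (filter ?Q T' @ s)"
    unfolding s using \<open>distinct T\<close> by simp
  moreover have "b \<in> set (filter ?Q T')"
    using \<open>b \<in> set T'\<close> by simp
  ultimately have "before (filter ?Q T') a b"
    using before_append_left by blast
  then show ?thesis by (simp add: before_filter_iff)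
next
  assume "last_write T b a"
  then have "last_write T' b a"
    using crp \<open>b \<in> set T'\<close> unfolding correct_reordered_prefix_def last_write_def is_read_def by blast
  then show ?thesis unfolding last_write_def by blast
qed

lemma correct_reordered_prefix_tranclp_po_wrd:
  assumes crp: "correct_reordered_prefix T T'" and "distinct T"
  shows "(po_wrd T)\<^sup>+\<^sup>+ a b \<Longrightarrow> b \<in> set T' \<Longrightarrow> before T' a b"
proof (induction rule: tranclp_induct)
  case (base b)
  then show ?case using correct_reordered_prefix_po_wrd[OF assms] by blast
next
  case (step c b)
  then have "before T' c b" using correct_reordered_prefix_po_wrd[OF assms] by blast
  moreover have "distinct T'" using crp unfolding correct_reordered_prefix_def by blast
  ultimately show ?case using step.IH before_in_set before_trans by blast
qed

lemma correct_reordered_prefix_release_before: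
  assumes crp: "correct_reordered_prefix T T'" and "distinct T"
    and "cs T a r" "cs T a' r'" "cs_lock a = cs_lock a'" "before T' a a'"
  shows "before T' r a'"
proof -
  have "is_acq a" "is_acq a'" "lock_of (act a) = lock_of (act a')"
    using assms(3-5) unfolding cs_def cs_lock_def is_acq_def by auto
  then obtain r'' where "cs T a r''" "before T' r'' a'"
    using crp \<open>before T' a a'\<close> unfolding correct_reordered_prefix_def by blast
  then show ?thesis using cs_unique \<open>distinct T\<close> \<open>cs T a r\<close> by blast
qed

lemma not_predictable_race_if_enclosed:
  assumes "distinct T"
    and "cs T a1 r1" "cs T a2 r2" "cs_lock a1 = cs_lock a2" "a1 \<noteq> a2"
    and "(po_wrd T)\<^sup>+\<^sup>+ a1 e" "(po_wrd T)\<^sup>+\<^sup>+ e r1"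
    and "(po_wrd T)\<^sup>+\<^sup>+ a2 f" "(po_wrd T)\<^sup>+\<^sup>+ f r2"
  shows "\<not> predictable_race T e f"
proof
  assume "predictable_race T e f"
  then obtain T' i where crp: "correct_reordered_prefix T T'"
    and adj: "Suc i < length T'" "T' ! i = e" "T' ! Suc i = f"
    unfolding predictable_race_def by blast
  have dist: "distinct T'" using crp unfolding correct_reordered_prefix_def by blast
  note forced = correct_reordered_prefix_tranclp_po_wrd[OF crp \<open>distinct T\<close>]
  note release = correct_reordered_prefix_release_before[OF crp \<open>distinct T\<close>]
  have "e \<in> set T'" "f \<in> set T'" using adj by (metis Suc_lessD nth_mem)+
  then have a1e: "before T' a1 e" and a2f: "before T' a2 f"
    using forced assms(6,8) by blast+
  then have "before T' a1 a2 \<or> before T' a2 a1"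
    using before_total before_in_set \<open>a1 \<noteq> a2\<close> by blast
  then show False
  proof
    assume "before T' a1 a2"
    then have r1a2: "before T' r1 a2" using release assms(2-4) by blast
    then have "before T' e r1" using forced assms(7) before_in_set by blast
    moreover have "before T' r1 f" using r1a2 a2f before_trans dist by blast
    ultimately show False using adjacent_nth_not_before(2)[OF dist adj] by blast
  next
    assume "before T' a2 a1"
    then have r2a1: "before T' r2 a1" using release assms(2-4) by (metis)
    then have "before T' f r2" using forced assms(9) before_in_set by blast
    then have "before T' f e" using r2a1 a1e before_trans dist by blast
    then show False using adjacent_nth_not_before(1)[OF dist adj] by blast
  qed
qed

lemma distinct_ex_trace: "distinct ex_trace"
  by (simp add: ex_trace_def)

lemma ex_trace_last_write_thread_group:
  "last_write ex_trace r w \<Longrightarrow> (tid w \<le> 2) = (tid r \<le> 2)"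
  unfolding last_write_def ex_trace_def by auto

lemma lockset_ex_trace_eq_empty: "tid e = 2 \<or> tid e = 4 \<Longrightarrow> lockset ex_trace e = {}"
  by (rule lockset_eq_empty) (auto simp: ex_trace_def is_acq_def)

lemma potential_lockset_pwr_ex_trace:
  "potential_lockset_pwr ex_trace (Ev 4 2 (Wr 0)) (Ev 11 4 (Wr 0))"
proof -
  have group: "(tid a \<le> 2) = (tid b \<le> 2)" if "pwr ex_trace a b" for a b
    using pwr_tid_invariant[where c = "\<lambda>t. t \<le> 2", OF ex_trace_last_write_thread_group that] .
  have "\<not> pwr ex_trace (Ev 4 2 (Wr 0)) (Ev 11 4 (Wr 0))" "\<not> pwr ex_trace (Ev 11 4 (Wr 0)) (Ev 4 2 (Wr 0))"
    using group by fastforce+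
  moreover have "conflicting ex_trace (Ev 4 2 (Wr 0)) (Ev 11 4 (Wr 0))"
    by (simp add: conflicting_def ex_trace_def)
  ultimately show ?thesis
    by (simp add: potential_lockset_pwr_def is_write_def lockset_ex_trace_eq_empty)
qed

lemma not_predictable_race_ex_trace:
  "\<not> predictable_race ex_trace (Ev 4 2 (Wr 0)) (Ev 11 4 (Wr 0))"
proof -
  have reads_from:
    "last_write ex_trace (Ev 3 2 (Rd 1)) (Ev 2 1 (Wr 1))"
    "last_write ex_trace (Ev 6 1 (Rd 2)) (Ev 5 2 (Wr 2))"
    "last_write ex_trace (Ev 10 4 (Rd 3)) (Ev 9 3 (Wr 3))"
    "last_write ex_trace (Ev 13 3 (Rd 4)) (Ev 12 4 (Wr 4))"
    by (rule last_write_intro[OF distinct_ex_trace, where x = 1]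
        last_write_intro[OF distinct_ex_trace, where x = 2]
        last_write_intro[OF distinct_ex_trace, where x = 3]
        last_write_intro[OF distinct_ex_trace, where x = 4];
        simp add: ex_trace_def)+
  have sections:
    "cs ex_trace (Ev 1 1 (Acq 0)) (Ev 7 1 (Rel 0))"
    "cs ex_trace (Ev 8 3 (Acq 0)) (Ev 14 3 (Rel 0))"
    by (rule cs_intro[OF distinct_ex_trace, where y = 0]; simp add: ex_trace_def)+
  have "(po_wrd ex_trace)\<^sup>+\<^sup>+ (Ev 1 1 (Acq 0)) (Ev 4 2 (Wr 0))"
    "(po_wrd ex_trace)\<^sup>+\<^sup>+ (Ev 4 2 (Wr 0)) (Ev 7 1 (Rel 0))"
    "(po_wrd ex_trace)\<^sup>+\<^sup>+ (Ev 8 3 (Acq 0)) (Ev 11 4 (Wr 0))"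
    "(po_wrd ex_trace)\<^sup>+\<^sup>+ (Ev 11 4 (Wr 0)) (Ev 14 3 (Rel 0))"
    by (rule tranclp_po_wrd_po[OF _ _ reads_from(1)] tranclp_po_wrd_po[OF _ _ reads_from(2)]
        tranclp_po_wrd_po[OF _ _ reads_from(3)] tranclp_po_wrd_po[OF _ _ reads_from(4)];
        simp add: ex_trace_def)+
  then show ?thesis
    using not_predictable_race_if_enclosed[OF distinct_ex_trace sections] by (simp add: cs_lock_def)
qed

theorem mainTheorem4:
  shows "potential_lockset_pwr ex_trace (Ev 4 2 (Wr 0)) (Ev 11 4 (Wr 0))
       \<and> lockset ex_trace (Ev 4 2 (Wr 0)) = {} \<and> lockset ex_trace (Ev 11 4 (Wr 0)) = {}
       \<and> (Ev 4 2 (Wr 0), Ev 11 4 (Wr 0)) \<notin> P ex_trace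
       \<and> \<not> (\<forall>T e f. distinct T \<and> potential_lockset_pwr T e f \<longrightarrow> (e, f) \<in> P T)"
  using potential_lockset_pwr_ex_trace not_predictable_race_ex_trace distinct_ex_trace
  by (auto simp: P_def lockset_ex_trace_eq_empty)

end
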